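(* Let $(R,\mathfrak m)$ be a commutative local ring, $n\ge 2$, and let $\varphi$ be a $2n\times2n$ alternating matrix over $R$ with Pfaffian $1$. Then ${\rm E}_{2n-1}(R)={\rm E}_\varphi(R)$.
   Context: ${\rm E}_m(R)$ is the subgroup of ${\rm SL}_m(R)$ generated by $I_m+\lambda e_{ij}$ ($i\neq j$, $\lambda\in R$). A square matrix is alternating if it is of the form $\nu-\nu^t$; alternating matrices of Pfaffian $1$ are invertible. Elements of $R^m$ are row vectors, ${}^t$ is transpose. For an invertible alternating $2n\times2n$ matrix $\varphi$ write $\varphi=\begin{pmatrix}0&-c\\ c^t&\nu\end{pmatrix}$, $\varphi^{-1}=\begin{pmatrix}0&d\\ -d^t&\mu\end{pmatrix}$ with $c,d\in R^{2n-1}$, and set $\alpha_\varphi(v)=I_{2n-1}+d^tv\nu$, $\beta_\varphi(v)=I_{2n-1}+\mu v^tc$; ${\rm E}_\varphi(R)$ is the subgroup of ${\rm GL}_{2n-1}(R)$ generated by all $\alpha_\varphi(v),\beta_\varphi(v)$, $v\in R^{2n-1}$. *)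

theory Defs
  imports "Jordan_Normal_Form.Determinant"
begin

definition is_ideal :: "'a::comm_ring_1 set \<Rightarrow> bool" where
  "is_ideal I \<longleftrightarrow> 0 \<in> I \<and> (\<forall>x\<in>I. \<forall>y\<in>I. x + y \<in> I) \<and> (\<forall>r. \<forall>x\<in>I. r * x \<in> I)"

definition maximal_ideal :: "'a::comm_ring_1 set \<Rightarrow> bool" where
  "maximal_ideal M \<longleftrightarrow> is_ideal M \<and> M \<noteq> UNIV \<and>
     (\<forall>J. is_ideal J \<and> M \<subseteq> J \<longrightarrow> J = M \<or> J = UNIV)"

definition local_ring :: "'a::comm_ring_1 itself \<Rightarrow> bool" where
  "local_ring _ \<longleftrightarrow> (\<exists>!M::'a set. maximal_ideal M)"

definition alternating :: "'a::comm_ring_1 mat \<Rightarrow> bool" where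
  "alternating A \<longleftrightarrow> (\<exists>\<nu> \<in> carrier_mat (dim_row A) (dim_row A). A = \<nu> - transpose_mat \<nu>)"

(* Pfaffian of a 2n x 2n matrix: sum over perfect matchings, encoded as permutations
   s with s(2i) < s(2i+1) and s(0) < s(2) < ... < s(2n-2). *)
definition pfaffian :: "'a::comm_ring_1 mat \<Rightarrow> 'a" where
  "pfaffian A = (let n = dim_row A div 2 in
     (\<Sum> p \<in> {p. p permutes {0..<2*n} \<and> (\<forall>i<n. p (2*i) < p (2*i+1))
                   \<and> (\<forall>i. i + 1 < n \<longrightarrow> p (2*i) < p (2*i+2))}.
        signof p * (\<Prod> i < n. A $$ (p (2*i), p (2*i+1)))))"

inductive_set gen_group :: "nat \<Rightarrow> 'a::comm_ring_1 mat set \<Rightarrow> 'a mat set"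
  for m :: nat and S :: "'a mat set" where
  one: "1\<^sub>m m \<in> gen_group m S"
| gen: "g \<in> S \<Longrightarrow> h \<in> gen_group m S \<Longrightarrow> g * h \<in> gen_group m S"
| inv: "g \<in> S \<Longrightarrow> g' \<in> carrier_mat m m \<Longrightarrow> g * g' = 1\<^sub>m m \<Longrightarrow> g' * g = 1\<^sub>m m \<Longrightarrow>
        h \<in> gen_group m S \<Longrightarrow> g' * h \<in> gen_group m S"

definition elem_mat :: "nat \<Rightarrow> nat \<Rightarrow> nat \<Rightarrow> 'a::comm_ring_1 \<Rightarrow> 'a mat" where
  "elem_mat m i j l = 1\<^sub>m m + mat m m (\<lambda>(k,k'). if k = i \<and> k' = j then l else 0)"

definition E_group :: "nat \<Rightarrow> 'a::comm_ring_1 mat set" where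
  "E_group m = gen_group m {elem_mat m i j l | i j l. i < m \<and> j < m \<and> i \<noteq> j}"

(* Block data of phi = [[0,-c],[c^t,nu]] and psi = phi^{-1} = [[0,d],[-d^t,mu]] (size 2n, m = 2n-1) *)
definition blk_c :: "'a::comm_ring_1 mat \<Rightarrow> 'a vec" where
  "blk_c A = vec (dim_row A - 1) (\<lambda>j. - A $$ (0, j + 1))"
definition blk_d :: "'a::comm_ring_1 mat \<Rightarrow> 'a vec" where
  "blk_d B = vec (dim_row B - 1) (\<lambda>j. B $$ (0, j + 1))"
definition blk_low :: "'a::comm_ring_1 mat \<Rightarrow> 'a mat" where
  "blk_low A = mat (dim_row A - 1) (dim_row A - 1) (\<lambda>(i,j). A $$ (i + 1, j + 1))"

definition outer :: "'a::comm_ring_1 vec \<Rightarrow> 'a vec \<Rightarrow> 'a mat" where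
  "outer x y = mat (dim_vec x) (dim_vec y) (\<lambda>(i,j). x $ i * y $ j)"

definition alpha_mat :: "'a::comm_ring_1 mat \<Rightarrow> 'a mat \<Rightarrow> 'a vec \<Rightarrow> 'a mat" where
  "alpha_mat \<phi> \<psi> v = 1\<^sub>m (dim_row \<phi> - 1) + outer (blk_d \<psi>) v * blk_low \<phi>"
definition beta_mat :: "'a::comm_ring_1 mat \<Rightarrow> 'a mat \<Rightarrow> 'a vec \<Rightarrow> 'a mat" where
  "beta_mat \<phi> \<psi> v = 1\<^sub>m (dim_row \<phi> - 1) + blk_low \<psi> * outer v (blk_c \<phi>)"

(* E_phi(R), psi being the inverse of phi *)
definition E_phi :: "'a::comm_ring_1 mat \<Rightarrow> 'a mat \<Rightarrow> 'a mat set" where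
  "E_phi \<phi> \<psi> = gen_group (dim_row \<phi> - 1)
     ({alpha_mat \<phi> \<psi> v | v. v \<in> carrier_vec (dim_row \<phi> - 1)} \<union>
      {beta_mat \<phi> \<psi> v | v. v \<in> carrier_vec (dim_row \<phi> - 1)})"

end

theory Submission
  imports Defs
begin

text \<open>
  Write \<open>T(x, y) = I + x\<^sup>t y\<close>. For \<open>c d\<^sup>t = 1\<close> let \<open>G(c, d)\<close> be the group generated by the
  \<open>T(d, y)\<close> with \<open>y d\<^sup>t = 0\<close> and the \<open>T(x, c)\<close> with \<open>c x\<^sup>t = 0\<close>. The block relations coming
  from \<open>\<phi> \<phi>\<^sup>-\<^sup>1 = I\<close> (with \<open>\<phi>\<^sup>-\<^sup>1\<close> again alternating, so its corner entry vanishes) identify the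
  \<open>\<alpha>\<^sub>\<phi>(v)\<close> and \<open>\<beta>\<^sub>\<phi>(v)\<close> with exactly these generators, so \<open>E\<^sub>\<phi>(R) = G(c, d)\<close>. On the other hand
  \<open>E\<^sub>m(R) = G(e\<^sub>1, e\<^sub>1)\<close>, the elementary matrices off the first row and column being commutators
  of those in it. Conjugation by \<open>g\<close> maps \<open>G(c, d)\<close> onto \<open>G(c g\<^sup>-\<^sup>1, d g\<^sup>t)\<close>, so it remains to
  move the unimodular pair \<open>(c, d)\<close> to \<open>(e\<^sub>1, e\<^sub>1)\<close> by an element of \<open>E\<^sub>m(R)\<close>: over a local
  ring some entry of \<open>d\<close> is a unit, and a few elementary operations finish the job.
\<close>

section \<open>Transvections\<close>

definition transvection :: "nat \<Rightarrow> 'a::comm_ring_1 vec \<Rightarrow> 'a vec \<Rightarrow> 'a mat" where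
  "transvection m x y = 1\<^sub>m m + outer x y"

lemma outer_carrier_mat [simp]:
  "x \<in> carrier_vec m \<Longrightarrow> y \<in> carrier_vec k \<Longrightarrow> outer x y \<in> carrier_mat m k"
  unfolding outer_def by auto

lemma outer_dim [simp]: "dim_row (outer x y) = dim_vec x" "dim_col (outer x y) = dim_vec y"
  unfolding outer_def by auto

lemma outer_index [simp]:
  "i < dim_vec x \<Longrightarrow> j < dim_vec y \<Longrightarrow> outer x y $$ (i, j) = x $ i * y $ j"
  unfolding outer_def by auto

lemma transvection_carrier_mat [simp]:
  "x \<in> carrier_vec m \<Longrightarrow> y \<in> carrier_vec m \<Longrightarrow> transvection m x y \<in> carrier_mat m m"
  unfolding transvection_def by auto

lemma transvection_dim [simp]:
  "x \<in> carrier_vec m \<Longrightarrow> y \<in> carrier_vec m \<Longrightarrow> dim_row (transvection m x y) = m"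
  "x \<in> carrier_vec m \<Longrightarrow> y \<in> carrier_vec m \<Longrightarrow> dim_col (transvection m x y) = m"
  unfolding transvection_def by auto

lemma transvection_index:
  assumes "x \<in> carrier_vec m" "y \<in> carrier_vec m" "i < m" "j < m"
  shows "transvection m x y $$ (i, j) = (if i = j then 1 else 0) + x $ i * y $ j"
  using assms unfolding transvection_def by auto

lemma sum_indicator_mult_left:
  "(i::nat) < m \<Longrightarrow> (\<Sum>k\<in>{0..<m}. (if i = k then 1 else 0) * (f k :: 'a::comm_ring_1)) = f i"
  by (simp add: if_distrib[of "\<lambda>a. a * _"] cong: if_cong)

lemma sum_indicator_mult_right:
  "(j::nat) < m \<Longrightarrow> (\<Sum>k\<in>{0..<m}. (f k :: 'a::comm_ring_1) * (if k = j then 1 else 0)) = f j"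
  by (simp add: if_distrib[of "\<lambda>a. _ * a"] cong: if_cong)

lemma transvection_mult_vec:
  assumes x: "x \<in> carrier_vec m" and "y \<in> carrier_vec m" and z: "z \<in> carrier_vec m"
  shows "transvection m x y *\<^sub>v z = z + (y \<bullet> z) \<cdot>\<^sub>v x"
proof (rule eq_vecI)
  fix i assume "i < dim_vec (z + (y \<bullet> z) \<cdot>\<^sub>v x)"
  then have i: "i < m" using x z by simp
  have "(transvection m x y *\<^sub>v z) $ i
      = (\<Sum>k\<in>{0..<m}. ((if i = k then 1 else 0) + x $ i * y $ k) * z $ k)"
    using assms i by (simp add: scalar_prod_def transvection_index)
  also have "\<dots> = (\<Sum>k\<in>{0..<m}. (if i = k then 1 else 0) * z $ k) + (\<Sum>k\<in>{0..<m}. x $ i * (y $ k * z $ k))"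
    by (simp add: algebra_simps sum.distrib)
  also have "\<dots> = z $ i + x $ i * (y \<bullet> z)"
    using i z by (simp only: sum_indicator_mult_left) (simp add: scalar_prod_def sum_distrib_left)
  finally show "(transvection m x y *\<^sub>v z) $ i = (z + (y \<bullet> z) \<cdot>\<^sub>v x) $ i"
    using i assms by (simp add: algebra_simps)
qed (use assms in simp)

lemma transvection_mult_index:
  assumes "x \<in> carrier_vec m" "y \<in> carrier_vec m" and z: "z \<in> carrier_vec m"
    and "w \<in> carrier_vec m" and i: "i < m" and j: "j < m"
  shows "(transvection m x y * transvection m z w) $$ (i, j)
    = (if i = j then 1 else 0) + x $ i * y $ j + z $ i * w $ j + (y \<bullet> z) * x $ i * w $ j"
proof -
  have "(transvection m x y * transvection m z w) $$ (i, j)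
      = (\<Sum>k\<in>{0..<m}. ((if i = k then 1 else 0) + x $ i * y $ k) * ((if k = j then 1 else 0) + z $ k * w $ j))"
    using assms by (simp add: scalar_prod_def transvection_index)
  also have "\<dots> = (\<Sum>k\<in>{0..<m}. (if i = k then 1 else 0) * ((if k = j then 1 else 0) + z $ k * w $ j))
      + (\<Sum>k\<in>{0..<m}. (x $ i * y $ k) * (if k = j then 1 else 0))
      + (\<Sum>k\<in>{0..<m}. x $ i * w $ j * (y $ k * z $ k))"
    by (simp add: algebra_simps sum.distrib)
  also have "\<dots> = ((if i = j then 1 else 0) + z $ i * w $ j) + x $ i * y $ j + x $ i * w $ j * (y \<bullet> z)"
    using i j z by (simp only: sum_indicator_mult_left sum_indicator_mult_right)
      (simp add: scalar_prod_def sum_distrib_left)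
  finally show ?thesis by (simp add: algebra_simps)
qed

lemma transvection_mult_same_left:
  assumes "x \<in> carrier_vec m" "y \<in> carrier_vec m" "w \<in> carrier_vec m" "y \<bullet> x = 0"
  shows "transvection m x y * transvection m x w = transvection m x (y + w)"
  using assms
  by (intro eq_matI) (auto simp del: index_mult_mat(1) simp: transvection_mult_index transvection_index algebra_simps)

lemma transvection_mult_same_right:
  assumes "x \<in> carrier_vec m" "z \<in> carrier_vec m" "w \<in> carrier_vec m" "w \<bullet> z = 0"
  shows "transvection m x w * transvection m z w = transvection m (x + z) w"
  using assms
  by (intro eq_matI) (auto simp del: index_mult_mat(1) simp: transvection_mult_index transvection_index algebra_simps)

lemma transvection_zero [simp]:
  "x \<in> carrier_vec m \<Longrightarrow> transvection m x (0\<^sub>v m) = 1\<^sub>m m"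
  by (rule eq_matI) (auto simp: transvection_index)

lemma transvection_inverse:
  assumes "x \<in> carrier_vec m" "y \<in> carrier_vec m" "y \<bullet> x = 0"
  shows "transvection m x y * transvection m x (- y) = 1\<^sub>m m"
    and "transvection m x (- y) * transvection m x y = 1\<^sub>m m"
  using assms transvection_mult_same_left[of x m y "- y"] transvection_mult_same_left[of x m "- y" y]
  by auto

lemma transvection_uminus_swap:
  "x \<in> carrier_vec m \<Longrightarrow> y \<in> carrier_vec m \<Longrightarrow> transvection m x (- y) = transvection m (- x) y"
  by (rule eq_matI) (auto simp: transvection_index)

lemma transvection_smult_swap:
  "x \<in> carrier_vec m \<Longrightarrow> y \<in> carrier_vec m \<Longrightarrow> transvection m (a \<cdot>\<^sub>v x) y = transvection m x (a \<cdot>\<^sub>v y)"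
  by (rule eq_matI) (auto simp: transvection_index)

lemma transpose_transvection:
  "x \<in> carrier_vec m \<Longrightarrow> y \<in> carrier_vec m \<Longrightarrow> transpose_mat (transvection m x y) = transvection m y x"
  by (rule eq_matI) (auto simp: transvection_index)

lemma elem_mat_eq_transvection:
  "i < m \<Longrightarrow> j < m \<Longrightarrow> elem_mat m i j l = transvection m (unit_vec m i) (l \<cdot>\<^sub>v unit_vec m j)"
  by (rule eq_matI) (auto simp: elem_mat_def transvection_index)

lemma mult_outer:
  assumes "A \<in> carrier_mat k m" "x \<in> carrier_vec m" "y \<in> carrier_vec l"
  shows "A * outer x y = outer (A *\<^sub>v x) y"
proof (rule eq_matI)
  fix i j assume "i < dim_row (outer (A *\<^sub>v x) y)" "j < dim_col (outer (A *\<^sub>v x) y)"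
  then have i: "i < k" and j: "j < l" using assms by auto
  have "(A * outer x y) $$ (i, j) = (\<Sum>q\<in>{0..<m}. A $$ (i, q) * x $ q) * y $ j"
    using assms i j by (simp add: scalar_prod_def sum_distrib_right mult.assoc)
  then show "(A * outer x y) $$ (i, j) = outer (A *\<^sub>v x) y $$ (i, j)"
    using assms i j by (simp add: scalar_prod_def)
qed (use assms in auto)

lemma outer_mult:
  assumes "A \<in> carrier_mat m l" "x \<in> carrier_vec k" "y \<in> carrier_vec m"
  shows "outer x y * A = outer x (transpose_mat A *\<^sub>v y)"
proof (rule eq_matI)
  fix i j
  assume "i < dim_row (outer x (transpose_mat A *\<^sub>v y))" "j < dim_col (outer x (transpose_mat A *\<^sub>v y))"
  then have i: "i < k" and j: "j < l" using assms by auto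
  have "(outer x y * A) $$ (i, j) = x $ i * (\<Sum>q\<in>{0..<m}. A $$ (q, j) * y $ q)"
    using assms i j by (simp add: scalar_prod_def sum_distrib_left algebra_simps)
  then show "(outer x y * A) $$ (i, j) = outer x (transpose_mat A *\<^sub>v y) $$ (i, j)"
    using assms i j by (simp add: scalar_prod_def)
qed (use assms in auto)

lemma conj_transvection:
  assumes "g \<in> carrier_mat m m" "g' \<in> carrier_mat m m" "g * g' = 1\<^sub>m m"
    and "x \<in> carrier_vec m" "y \<in> carrier_vec m"
  shows "g * transvection m x y * g' = transvection m (g *\<^sub>v x) (transpose_mat g' *\<^sub>v y)"
proof -
  have "g * transvection m x y = g * 1\<^sub>m m + g * outer x y"
    unfolding transvection_def using assms by (intro mult_add_distrib_mat[of g m m]) auto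
  also have "\<dots> = g + outer (g *\<^sub>v x) y"
    using assms by (simp add: mult_outer)
  finally have "g * transvection m x y * g' = (g + outer (g *\<^sub>v x) y) * g'"
    by simp
  also have "\<dots> = g * g' + outer (g *\<^sub>v x) y * g'"
    using assms by (intro add_mult_distrib_mat[of _ m m]) auto
  finally show ?thesis
    unfolding transvection_def using assms outer_mult[of g' m m "g *\<^sub>v x" m y] by simp
qed

lemma transvection_commutator:
  assumes "x \<in> carrier_vec m" "u \<in> carrier_vec m" "u' \<in> carrier_vec m" "y \<in> carrier_vec m"
    and "u \<bullet> x = 0" "y \<bullet> u' = 0" "y \<bullet> x = 0" "u \<bullet> u' = 1"
  shows "transvection m x u * transvection m u' y * transvection m x (- u) * transvection m u' (- y)
    = transvection m x y"
proof -
  have "transvection m x u *\<^sub>v u' = u' + x"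
    using assms by (simp add: transvection_mult_vec add.commute)
  moreover have "transpose_mat (transvection m x (- u)) *\<^sub>v y = y + (x \<bullet> y) \<cdot>\<^sub>v (- u)"
    using assms by (simp add: transpose_transvection transvection_mult_vec)
  moreover have "x \<bullet> y = 0"
    using assms by (simp add: comm_scalar_prod[of x m y])
  moreover have "y + 0 \<cdot>\<^sub>v (- u) = y"
    using assms by auto
  ultimately have conj: "transvection m x u * transvection m u' y * transvection m x (- u)
      = transvection m (u' + x) y"
    using assms conj_transvection[of "transvection m x u" m "transvection m x (- u)" u' y]
    by (simp add: transvection_inverse)
  have "u' + x + - u' = x" "u' + (x + - u') = x"
    using assms by auto
  then show ?thesis
    using conj assms transvection_mult_same_right[of "u' + x" m "- u'" y]
    by (simp add: transvection_uminus_swap)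
qed

section \<open>Groups generated by matrices\<close>

lemma left_inverse_eq_right_inverse:
  fixes A :: "'a::comm_ring_1 mat"
  assumes "A \<in> carrier_mat m m" "B \<in> carrier_mat m m" "C \<in> carrier_mat m m"
    and "A * B = 1\<^sub>m m" "C * A = 1\<^sub>m m"
  shows "C = B"
proof -
  have "C = C * (A * B)" using assms by simp
  also have "\<dots> = (C * A) * B" using assms by (intro assoc_mult_mat[symmetric]) auto
  finally show ?thesis using assms by simp
qed

lemma conj_mult_distrib:
  fixes g :: "'a::comm_ring_1 mat"
  assumes "g \<in> carrier_mat m m" "g' \<in> carrier_mat m m" "a \<in> carrier_mat m m" "b \<in> carrier_mat m m"
    and "g' * g = 1\<^sub>m m"
  shows "g * (a * b) * g' = (g * a * g') * (g * b * g')"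
proof -
  have "g' * (g * (b * g')) = (g' * g) * (b * g')"
    using assms by (intro assoc_mult_mat[symmetric]) auto
  then have "g' * (g * (b * g')) = b * g'"
    using assms by simp
  then show ?thesis
    using assms by (simp add: assoc_mult_mat[of _ m m _ m _ m])
qed

lemma conj_cancel:
  fixes g :: "'a::comm_ring_1 mat"
  assumes "g \<in> carrier_mat m m" "g' \<in> carrier_mat m m" "X \<in> carrier_mat m m"
    and "g * g' = 1\<^sub>m m" "g' * g = 1\<^sub>m m"
  shows "g' * (g * X * g') * g = X"
proof -
  have "g' * (g * X) = (g' * g) * X"
    using assms by (intro assoc_mult_mat[symmetric]) auto
  then have "g' * (g * X) = X"
    using assms by simp
  then show ?thesis
    using assms by (simp add: assoc_mult_mat[of _ m m _ m _ m])
qed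

lemma scalar_prod_contragredient:
  fixes g :: "'a::comm_ring_1 mat"
  assumes "g \<in> carrier_mat m m" "g' \<in> carrier_mat m m" "g' * g = 1\<^sub>m m"
    and "x \<in> carrier_vec m" "y \<in> carrier_vec m"
  shows "(transpose_mat g' *\<^sub>v y) \<bullet> (g *\<^sub>v x) = y \<bullet> x"
proof -
  have "(transpose_mat g' *\<^sub>v y) \<bullet> (g *\<^sub>v x) = y \<bullet> (g' *\<^sub>v (g *\<^sub>v x))"
    using assms by (intro transpose_vec_mult_scalar) auto
  also have "g' *\<^sub>v (g *\<^sub>v x) = x"
    using assms by (simp flip: assoc_mult_mat_vec[of g' m m g m x])
  finally show ?thesis .
qed

lemma gen_group_carrier:
  assumes "S \<subseteq> carrier_mat m m" "h \<in> gen_group m S"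
  shows "h \<in> carrier_mat m m"
  using assms(2) by (induction h rule: gen_group.induct) (use assms(1) in auto)

lemma gen_group_mult:
  assumes S: "S \<subseteq> carrier_mat m m" and "a \<in> gen_group m S" "b \<in> gen_group m S"
  shows "a * b \<in> gen_group m S"
  using assms(2)
proof (induction a rule: gen_group.induct)
  case one
  then show ?case using gen_group_carrier[OF S assms(3)] assms(3) by simp
next
  case (gen g h)
  then have "g * h * b = g * (h * b)"
    using S gen_group_carrier[OF S] assms(3) by (intro assoc_mult_mat) auto
  then show ?case using gen by (auto intro: gen_group.gen)
next
  case (inv g g' h)
  then have "g' * h * b = g' * (h * b)"
    using S gen_group_carrier[OF S] assms(3) by (intro assoc_mult_mat) auto
  then show ?case using inv by (auto intro: gen_group.inv)
qed

lemma gen_group_generator: "S \<subseteq> carrier_mat m m \<Longrightarrow> g \<in> S \<Longrightarrow> g \<in> gen_group m S"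
  using gen_group.gen[OF _ gen_group.one, of g S m] by auto

lemma gen_group_inverse_generator:
  "g \<in> S \<Longrightarrow> g' \<in> carrier_mat m m \<Longrightarrow> g * g' = 1\<^sub>m m \<Longrightarrow> g' * g = 1\<^sub>m m \<Longrightarrow> g' \<in> gen_group m S"
  using gen_group.inv[OF _ _ _ _ gen_group.one, of g S g' m] by auto

lemma gen_group_subset:
  assumes "1\<^sub>m m \<in> H" "\<And>a b. a \<in> H \<Longrightarrow> b \<in> H \<Longrightarrow> a * b \<in> H" "S \<subseteq> H"
    and "\<And>g g'. g \<in> S \<Longrightarrow> g' \<in> carrier_mat m m \<Longrightarrow> g * g' = 1\<^sub>m m \<Longrightarrow> g' * g = 1\<^sub>m m \<Longrightarrow> g' \<in> H"
  shows "gen_group m S \<subseteq> H"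
proof
  fix h assume "h \<in> gen_group m S"
  then show "h \<in> H" by (induction h rule: gen_group.induct) (use assms in auto)
qed

lemma gen_group_transpose:
  assumes S: "S \<subseteq> carrier_mat m m" and S_transpose: "\<And>g. g \<in> S \<Longrightarrow> transpose_mat g \<in> S"
    and "h \<in> gen_group m S"
  shows "transpose_mat h \<in> gen_group m S"
  using assms(3)
proof (induction h rule: gen_group.induct)
  case one
  then show ?case by (simp add: gen_group.one)
next
  case (gen g h)
  have "transpose_mat (g * h) = transpose_mat h * transpose_mat g"
    using gen S gen_group_carrier[OF S] by (intro transpose_mult) auto
  then show ?case
    using gen S S_transpose gen_group_mult gen_group_generator by metis
next
  case (inv g g' h)
  have g: "g \<in> carrier_mat m m" using inv S by auto
  have "transpose_mat g * transpose_mat g' = 1\<^sub>m m" "transpose_mat g' * transpose_mat g = 1\<^sub>m m"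
    using inv g by (simp_all flip: transpose_mult[of _ m m _ m])
  then have "transpose_mat g' \<in> gen_group m S"
    using inv S_transpose by (intro gen_group_inverse_generator[of "transpose_mat g"]) auto
  moreover have "transpose_mat (g' * h) = transpose_mat h * transpose_mat g'"
    using inv S gen_group_carrier[OF S] by (intro transpose_mult) auto
  ultimately show ?case
    using inv S gen_group_mult by metis
qed

lemma gen_group_conj:
  assumes g: "g \<in> carrier_mat m m" "g' \<in> carrier_mat m m" "g * g' = 1\<^sub>m m" "g' * g = 1\<^sub>m m"
    and S: "S \<subseteq> carrier_mat m m" and S': "S' \<subseteq> carrier_mat m m"
    and conj_S: "\<And>X. X \<in> S \<Longrightarrow> g * X * g' \<in> S'"
    and "h \<in> gen_group m S"
  shows "g * h * g' \<in> gen_group m S'"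
  using assms(8)
proof (induction h rule: gen_group.induct)
  case one
  then show ?case using g by (simp add: gen_group.one)
next
  case (gen a h)
  have "g * (a * h) * g' = (g * a * g') * (g * h * g')"
    using gen g S gen_group_carrier[OF S] by (intro conj_mult_distrib) auto
  then show ?case
    using gen S' conj_S gen_group_mult gen_group_generator by metis
next
  case (inv a a' h)
  have a: "a \<in> carrier_mat m m" using inv S by auto
  have "g * (a' * h) * g' = (g * a' * g') * (g * h * g')"
    using inv g S gen_group_carrier[OF S] by (intro conj_mult_distrib) auto
  moreover have "(g * a * g') * (g * a' * g') = 1\<^sub>m m" "(g * a' * g') * (g * a * g') = 1\<^sub>m m"
    using inv g a conj_mult_distrib[of g m g'] by (metis one_carrier_mat right_mult_one_mat)+
  then have "g * a' * g' \<in> gen_group m S'"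
    using inv g conj_S by (intro gen_group_inverse_generator[of "g * a * g'"]) auto
  ultimately show ?case
    using inv S' gen_group_mult by metis
qed

section \<open>The elementary group\<close>

lemma E_group_gens_carrier:
  "{elem_mat m i j l | i j l. i < m \<and> j < m \<and> i \<noteq> j} \<subseteq> carrier_mat m m"
  unfolding elem_mat_def by auto

lemma E_group_carrier: "h \<in> E_group m \<Longrightarrow> h \<in> carrier_mat m m"
  unfolding E_group_def using gen_group_carrier[OF E_group_gens_carrier] .

lemma E_group_mult: "a \<in> E_group m \<Longrightarrow> b \<in> E_group m \<Longrightarrow> a * b \<in> E_group m"
  unfolding E_group_def using gen_group_mult[OF E_group_gens_carrier] .

lemma one_in_E_group: "1\<^sub>m m \<in> E_group m"
  unfolding E_group_def by (rule gen_group.one)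

lemma elem_mat_in_E_group: "i < m \<Longrightarrow> j < m \<Longrightarrow> i \<noteq> j \<Longrightarrow> elem_mat m i j l \<in> E_group m"
  unfolding E_group_def by (rule gen_group_generator[OF E_group_gens_carrier]) auto

lemma transpose_in_E_group:
  assumes "h \<in> E_group m"
  shows "transpose_mat h \<in> E_group m"
proof -
  let ?S = "{elem_mat m i j l | i j l. i < m \<and> j < m \<and> i \<noteq> j} :: 'a mat set"
  have "transpose_mat g \<in> ?S" if "g \<in> ?S" for g
  proof -
    obtain i j l where ijl: "g = elem_mat m i j l" "i < m" "j < m" "i \<noteq> j"
      using \<open>g \<in> ?S\<close> by auto
    then have "transpose_mat g = elem_mat m j i l"
      by (intro eq_matI) (auto simp: elem_mat_def)
    then show ?thesis using ijl by blast
  qed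
  then show ?thesis
    using assms unfolding E_group_def by (intro gen_group_transpose[OF E_group_gens_carrier]) auto
qed

lemma first_row_transvection_in_E_group:
  assumes m: "0 < m" and z: "z \<in> carrier_vec m" "z $ 0 = 0"
  shows "transvection m (unit_vec m 0) z \<in> E_group m"
proof -
  let ?e = "unit_vec m 0 :: 'a vec"
  define z_upto where "z_upto k = vec m (\<lambda>j. if j < k then z $ j else 0)" for k
  have z_upto_carrier [simp]: "z_upto k \<in> carrier_vec m" for k
    unfolding z_upto_def by auto
  have "transvection m ?e (z_upto k) \<in> E_group m" for k
  proof (induction k)
    case 0
    have "z_upto 0 = 0\<^sub>v m" unfolding z_upto_def by auto
    then show ?case by (simp add: one_in_E_group)
  next
    case (Suc k)
    define w where "w = vec m (\<lambda>j. if j = k then z $ j else 0)"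
    have w: "w \<in> carrier_vec m" unfolding w_def by auto
    have "z_upto (Suc k) = z_upto k + w"
      unfolding z_upto_def w_def by (rule eq_vecI) auto
    moreover have "z_upto k \<bullet> ?e = 0"
      using m z by (simp add: z_upto_def)
    ultimately have "transvection m ?e (z_upto (Suc k)) = transvection m ?e (z_upto k) * transvection m ?e w"
      using w by (simp add: transvection_mult_same_left)
    moreover have "transvection m ?e w \<in> E_group m"
    proof (cases "k < m \<and> k \<noteq> 0")
      case True
      then have "w = z $ k \<cdot>\<^sub>v unit_vec m k" unfolding w_def by (intro eq_vecI) auto
      then show ?thesis
        using True m elem_mat_in_E_group[of 0 m k "z $ k"] by (simp add: elem_mat_eq_transvection)
    next
      case False
      then have "w = 0\<^sub>v m" unfolding w_def using z by (intro eq_vecI) auto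
      then show ?thesis by (simp add: one_in_E_group)
    qed
    ultimately show ?case using Suc E_group_mult by metis
  qed
  moreover have "z_upto m = z" unfolding z_upto_def using z by (intro eq_vecI) auto
  ultimately show ?thesis by metis
qed

lemma first_col_transvection_in_E_group:
  assumes "0 < m" "x \<in> carrier_vec m" "x $ 0 = 0"
  shows "transvection m x (unit_vec m 0) \<in> E_group m"
  using transpose_in_E_group[OF first_row_transvection_in_E_group[OF assms]] assms
  by (simp add: transpose_transvection)

definition transvection_gens :: "nat \<Rightarrow> 'a::comm_ring_1 vec \<Rightarrow> 'a vec \<Rightarrow> 'a mat set" where
  "transvection_gens m c d =
     {transvection m d y | y. y \<in> carrier_vec m \<and> y \<bullet> d = 0} \<union>
     {transvection m x c | x. x \<in> carrier_vec m \<and> c \<bullet> x = 0}"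

lemma transvection_gens_carrier:
  "c \<in> carrier_vec m \<Longrightarrow> d \<in> carrier_vec m \<Longrightarrow> transvection_gens m c d \<subseteq> carrier_mat m m"
  unfolding transvection_gens_def by auto

lemma transvection_gens_cases:
  assumes "X \<in> transvection_gens m c d"
  obtains (row) y where "X = transvection m d y" "y \<in> carrier_vec m" "y \<bullet> d = 0"
    | (col) x where "X = transvection m x c" "x \<in> carrier_vec m" "c \<bullet> x = 0"
  using assms unfolding transvection_gens_def by blast

lemma transvection_gens_inverse:
  assumes c: "c \<in> carrier_vec m" and d: "d \<in> carrier_vec m" and X: "X \<in> transvection_gens m c d"
    and X': "X' \<in> carrier_mat m m" "X * X' = 1\<^sub>m m"
  shows "X' \<in> transvection_gens m c d"
  using X
proof (cases rule: transvection_gens_cases)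
  case (row y)
  then have "transvection m d (- y) * X = 1\<^sub>m m"
    using d by (simp add: transvection_inverse)
  then have "X' = transvection m d (- y)"
    using left_inverse_eq_right_inverse[of X m X' "transvection m d (- y)"] X' d row by auto
  then show ?thesis
    using row d unfolding transvection_gens_def by auto
next
  case (col x)
  then have "transvection m (- x) c * X = 1\<^sub>m m"
    using c transvection_inverse(2)[of x m c] by (simp add: transvection_uminus_swap)
  then have "X' = transvection m (- x) c"
    using left_inverse_eq_right_inverse[of X m X' "transvection m (- x) c"] X' c col by auto
  then show ?thesis
    using col c unfolding transvection_gens_def by auto
qed

lemma conj_transvection_gens:
  assumes g: "g \<in> carrier_mat m m" "g' \<in> carrier_mat m m" "g * g' = 1\<^sub>m m" "g' * g = 1\<^sub>m m"
    and c: "c \<in> carrier_vec m" and d: "d \<in> carrier_vec m" and X: "X \<in> transvection_gens m c d"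
  shows "g * X * g' \<in> transvection_gens m (transpose_mat g' *\<^sub>v c) (g *\<^sub>v d)"
  using X
proof (cases rule: transvection_gens_cases)
  case (row y)
  then show ?thesis
    using g d scalar_prod_contragredient[OF g(1,2,4) d row(2)]
    unfolding transvection_gens_def by (auto simp: conj_transvection)
next
  case (col x)
  then show ?thesis
    using g c scalar_prod_contragredient[OF g(1,2,4) col(2) c]
    unfolding transvection_gens_def by (auto simp: conj_transvection)
qed

lemma conj_gen_transvection_gens:
  assumes g: "g \<in> carrier_mat m m" "g' \<in> carrier_mat m m" "g * g' = 1\<^sub>m m" "g' * g = 1\<^sub>m m"
    and c: "c \<in> carrier_vec m" and d: "d \<in> carrier_vec m"
    and h: "h \<in> gen_group m (transvection_gens m c d)"
  shows "g * h * g' \<in> gen_group m (transvection_gens m (transpose_mat g' *\<^sub>v c) (g *\<^sub>v d))"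
proof (rule gen_group_conj[OF g _ _ conj_transvection_gens[OF g c d] h])
  show "transvection_gens m c d \<subseteq> carrier_mat m m"
    using c d by (rule transvection_gens_carrier)
  show "transvection_gens m (transpose_mat g' *\<^sub>v c) (g *\<^sub>v d) \<subseteq> carrier_mat m m"
    using g c d by (intro transvection_gens_carrier) auto
qed

lemma elem_mat_in_gen_unit_transvections:
  assumes ij: "i < m" "j < m" "i \<noteq> j"
  shows "elem_mat m i j l \<in> gen_group m (transvection_gens m (unit_vec m 0) (unit_vec m 0))"
proof -
  let ?e = "unit_vec m 0 :: 'a vec"
  let ?S = "transvection_gens m ?e ?e"
  have m: "0 < m" using ij by auto
  have S: "?S \<subseteq> carrier_mat m m" using transvection_gens_carrier[of ?e m ?e] by auto
  have row: "transvection m ?e z \<in> gen_group m ?S" if "z \<in> carrier_vec m" "z $ 0 = 0" for z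
    using that m by (intro gen_group_generator[OF S]) (auto simp: transvection_gens_def)
  have col: "transvection m x ?e \<in> gen_group m ?S" if "x \<in> carrier_vec m" "x $ 0 = 0" for x
    using that m by (intro gen_group_generator[OF S]) (auto simp: transvection_gens_def)
  have elem: "elem_mat m i j l = transvection m (l \<cdot>\<^sub>v unit_vec m i) (unit_vec m j)"
    using ij by (simp add: elem_mat_eq_transvection transvection_smult_swap)
  consider "i = 0" | "j = 0" | "i \<noteq> 0" "j \<noteq> 0" by auto
  then show ?thesis
  proof cases
    case 1
    then show ?thesis using ij row by (simp add: elem_mat_eq_transvection)
  next
    case 2
    then show ?thesis using ij col elem by simp
  next
    case 3
    let ?x = "l \<cdot>\<^sub>v unit_vec m i" and ?y = "unit_vec m j :: 'a vec"
    have "transvection m ?x ?e * transvection m ?e ?y * transvection m ?x (- ?e) * transvection m ?e (- ?y)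
        = elem_mat m i j l"
      using ij 3 m elem by (subst transvection_commutator) auto
    moreover have "transvection m ?x (- ?e) = transvection m (- ?x) ?e"
      using ij m by (simp add: transvection_uminus_swap)
    moreover have "transvection m ?x ?e \<in> gen_group m ?S" "transvection m (- ?x) ?e \<in> gen_group m ?S"
      using ij 3 by (auto intro!: col)
    moreover have "transvection m ?e ?y \<in> gen_group m ?S" "transvection m ?e (- ?y) \<in> gen_group m ?S"
      using ij 3 by (auto intro!: row)
    ultimately show ?thesis
      using gen_group_mult[OF S] by metis
  qed
qed

lemma E_group_eq_gen_unit_transvections:
  assumes m: "0 < m"
  shows "(E_group m :: 'a::comm_ring_1 mat set) = gen_group m (transvection_gens m (unit_vec m 0) (unit_vec m 0))"
proof
  let ?e = "unit_vec m 0 :: 'a vec"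
  let ?S = "transvection_gens m ?e ?e"
  have S: "?S \<subseteq> carrier_mat m m" using transvection_gens_carrier[of ?e m ?e] by auto
  have S_E: "?S \<subseteq> E_group m"
    using m first_row_transvection_in_E_group first_col_transvection_in_E_group
    by (auto simp: transvection_gens_def)
  show "gen_group m ?S \<subseteq> E_group m"
    using S_E transvection_gens_inverse[of ?e m ?e]
    by (intro gen_group_subset one_in_E_group E_group_mult) auto
  show "E_group m \<subseteq> gen_group m ?S"
    unfolding E_group_def
  proof (rule gen_group_subset)
    fix X X' :: "'a mat"
    assume X: "X \<in> {elem_mat m i j l | i j l. i < m \<and> j < m \<and> i \<noteq> j}"
      and X': "X' \<in> carrier_mat m m" "X * X' = 1\<^sub>m m" "X' * X = 1\<^sub>m m"
    then obtain i j l where ij: "i < m" "j < m" "i \<noteq> j" and X_eq: "X = elem_mat m i j l" by auto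
    have "- (l \<cdot>\<^sub>v unit_vec m j) = (- l) \<cdot>\<^sub>v unit_vec m j"
      by (intro eq_vecI) auto
    then have "X * elem_mat m i j (- l) = 1\<^sub>m m"
      using ij transvection_inverse(1)[of "unit_vec m i" m "l \<cdot>\<^sub>v unit_vec m j"]
      unfolding X_eq by (simp add: elem_mat_eq_transvection)
    then have "X' = elem_mat m i j (- l)"
      using left_inverse_eq_right_inverse[of X m "elem_mat m i j (- l)" X'] X' ij
      unfolding X_eq by (simp add: elem_mat_eq_transvection)
    then show "X' \<in> gen_group m ?S"
      using ij elem_mat_in_gen_unit_transvections by simp
  qed (use elem_mat_in_gen_unit_transvections gen_group_mult[OF S] in \<open>auto intro: gen_group.one\<close>)
qed

section \<open>Local rings\<close>

lemma ideal_eq_UNIV_if_one: "is_ideal J \<Longrightarrow> 1 \<in> J \<Longrightarrow> J = UNIV"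
  unfolding is_ideal_def by (metis UNIV_eq_I mult.right_neutral)

lemma ideal_sum_mem:
  assumes "is_ideal I" "\<And>i. i \<in> S \<Longrightarrow> f i \<in> I"
  shows "sum f S \<in> I"
  using assms(2) by (induction S rule: infinite_finite_induct) (use assms(1) in \<open>auto simp: is_ideal_def\<close>)

lemma is_ideal_Union_chain:
  assumes "C \<noteq> {}" "\<forall>J\<in>C. is_ideal J" "\<forall>J\<in>C. \<forall>K\<in>C. J \<subseteq> K \<or> K \<subseteq> J"
  shows "is_ideal (\<Union>C)"
  unfolding is_ideal_def
proof (intro conjI ballI allI)
  show "0 \<in> \<Union>C" using assms(1,2) unfolding is_ideal_def by blast
next
  fix a b assume "a \<in> \<Union>C" "b \<in> \<Union>C"
  then obtain J K where "J \<in> C" "a \<in> J" "K \<in> C" "b \<in> K" by blast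
  moreover have "J \<subseteq> K \<or> K \<subseteq> J" using assms(3) \<open>J \<in> C\<close> \<open>K \<in> C\<close> by blast
  ultimately show "a + b \<in> \<Union>C" using assms(2) unfolding is_ideal_def by blast
next
  fix r a assume "a \<in> \<Union>C"
  then show "r * a \<in> \<Union>C" using assms(2) unfolding is_ideal_def by blast
qed

lemma proper_ideal_in_maximal_ideal:
  fixes I :: "'a::comm_ring_1 set"
  assumes "is_ideal I" "1 \<notin> I"
  obtains M where "maximal_ideal M" "I \<subseteq> M"
proof -
  define A where "A = {J. is_ideal J \<and> I \<subseteq> J \<and> 1 \<notin> J}"
  have "\<exists>U\<in>A. \<forall>J\<in>C. J \<subseteq> U" if C: "C \<in> chains A" for C
  proof (cases "C = {}")
    case True
    then show ?thesis using assms unfolding A_def by blast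
  next
    case False
    have "C \<subseteq> A" "\<forall>J\<in>C. \<forall>K\<in>C. J \<subseteq> K \<or> K \<subseteq> J"
      using C unfolding chains_def chain_subset_def by auto
    then have "\<Union>C \<in> A"
      using False is_ideal_Union_chain[of C] unfolding A_def by blast
    then show ?thesis by blast
  qed
  then obtain M where M: "M \<in> A" and M_max: "\<forall>J\<in>A. M \<subseteq> J \<longrightarrow> J = M"
    using Zorn_Lemma2[of A] by blast
  have "maximal_ideal M"
    unfolding maximal_ideal_def
  proof (intro conjI allI impI)
    show "is_ideal M" "M \<noteq> UNIV" using M unfolding A_def by auto
    fix J assume J: "is_ideal J \<and> M \<subseteq> J"
    show "J = M \<or> J = UNIV"
    proof (cases "1 \<in> J")
      case True
      then show ?thesis using J ideal_eq_UNIV_if_one by blast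
    next
      case False
      then have "J \<in> A" using J M unfolding A_def by auto
      then show ?thesis using M_max J by blast
    qed
  qed
  then show ?thesis using M that unfolding A_def by blast
qed

lemma local_ring_nonunit_in_maximal_ideal:
  fixes x :: "'a::comm_ring_1"
  assumes "local_ring TYPE('a)" "maximal_ideal M" "\<forall>w. w * x \<noteq> 1"
  shows "x \<in> M"
proof -
  have "is_ideal (range (\<lambda>r. r * x))"
    unfolding is_ideal_def
  proof (intro conjI ballI allI)
    show "0 \<in> range (\<lambda>r. r * x)" by (rule range_eqI[of _ _ 0]) simp
  next
    fix a b assume "a \<in> range (\<lambda>r. r * x)" "b \<in> range (\<lambda>r. r * x)"
    then obtain r s where "a = r * x" "b = s * x" by auto
    then show "a + b \<in> range (\<lambda>r. r * x)" by (intro range_eqI[of _ _ "r + s"]) (simp add: distrib_right)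
  next
    fix t a assume "a \<in> range (\<lambda>r. r * x)"
    then obtain r where "a = r * x" by auto
    then show "t * a \<in> range (\<lambda>r. r * x)" by (intro range_eqI[of _ _ "t * r"]) (simp add: mult.assoc)
  qed
  moreover have "1 \<notin> range (\<lambda>r. r * x)" using assms(3) by auto
  ultimately obtain M' where "maximal_ideal M'" "range (\<lambda>r. r * x) \<subseteq> M'"
    by (rule proper_ideal_in_maximal_ideal)
  moreover have "M' = M" using assms(1,2) \<open>maximal_ideal M'\<close> unfolding local_ring_def by blast
  moreover have "x \<in> range (\<lambda>r. r * x)" by (rule range_eqI[of _ _ 1]) simp
  ultimately show ?thesis by blast
qed

lemma local_ring_unimodular_unit_entry:
  fixes c d :: "'a::comm_ring_1 vec"
  assumes loc: "local_ring TYPE('a)" and "c \<in> carrier_vec m" "d \<in> carrier_vec m" "c \<bullet> d = 1"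
  shows "\<exists>k<m. \<exists>w. w * d $ k = 1"
proof (rule ccontr)
  assume no_unit: "\<not> ?thesis"
  from loc obtain M :: "'a set" where M: "maximal_ideal M" unfolding local_ring_def by auto
  then have "is_ideal M" unfolding maximal_ideal_def by auto
  have "d $ k \<in> M" if "k < m" for k
    using local_ring_nonunit_in_maximal_ideal[OF loc M] no_unit that by auto
  then have "c \<bullet> d \<in> M"
    using \<open>is_ideal M\<close> assms unfolding scalar_prod_def is_ideal_def
    by (intro ideal_sum_mem[OF \<open>is_ideal M\<close>]) (auto simp: mult.commute)
  then show False
    using assms ideal_eq_UNIV_if_one[OF \<open>is_ideal M\<close>] M unfolding maximal_ideal_def by auto
qed

section \<open>Unimodular pairs over a local ring\<close>

lemma inverse_pair_mult:
  fixes a :: "'a::comm_ring_1 mat"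
  assumes "a \<in> carrier_mat m m" "a' \<in> carrier_mat m m" "b \<in> carrier_mat m m" "b' \<in> carrier_mat m m"
    and "a * a' = 1\<^sub>m m" "a' * a = 1\<^sub>m m" "b * b' = 1\<^sub>m m" "b' * b = 1\<^sub>m m"
  shows "(a * b) * (b' * a') = 1\<^sub>m m" "(b' * a') * (a * b) = 1\<^sub>m m"
proof -
  have "b * (b' * a') = (b * b') * a'"
    using assms by (intro assoc_mult_mat[symmetric]) auto
  then have "b * (b' * a') = a'"
    using assms by simp
  moreover have "a' * (a * b) = (a' * a) * b"
    using assms by (intro assoc_mult_mat[symmetric]) auto
  then have "a' * (a * b) = b"
    using assms by simp
  ultimately show "(a * b) * (b' * a') = 1\<^sub>m m" "(b' * a') * (a * b) = 1\<^sub>m m"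
    using assms by (simp_all add: assoc_mult_mat[of _ m m _ m _ m])
qed

definition E_related :: "nat \<Rightarrow> 'a::comm_ring_1 vec \<times> 'a vec \<Rightarrow> 'a vec \<times> 'a vec \<Rightarrow> bool" where
  "E_related m p q \<longleftrightarrow> (\<exists>g g'. g \<in> E_group m \<and> g' \<in> E_group m \<and> g * g' = 1\<^sub>m m \<and> g' * g = 1\<^sub>m m \<and>
     g *\<^sub>v fst p = fst q \<and> transpose_mat g' *\<^sub>v snd p = snd q)"

lemma E_related_trans:
  assumes d: "d \<in> carrier_vec m" and c: "c \<in> carrier_vec m"
    and "E_related m (d, c) (d1, c1)" "E_related m (d1, c1) (d2, c2)"
  shows "E_related m (d, c) (d2, c2)"
proof -
  obtain g g' where g: "g \<in> E_group m" "g' \<in> E_group m" "g * g' = 1\<^sub>m m" "g' * g = 1\<^sub>m m"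
    and gd: "g *\<^sub>v d = d1" and gc: "transpose_mat g' *\<^sub>v c = c1"
    using assms(3) unfolding E_related_def by auto
  obtain h h' where h: "h \<in> E_group m" "h' \<in> E_group m" "h * h' = 1\<^sub>m m" "h' * h = 1\<^sub>m m"
    and hd: "h *\<^sub>v d1 = d2" and hc: "transpose_mat h' *\<^sub>v c1 = c2"
    using assms(4) unfolding E_related_def by auto
  have carrier: "g \<in> carrier_mat m m" "g' \<in> carrier_mat m m" "h \<in> carrier_mat m m" "h' \<in> carrier_mat m m"
    using g h E_group_carrier by auto
  have "(h * g) *\<^sub>v d = d2"
    using carrier d gd hd by (simp add: assoc_mult_mat_vec[of _ m m _ m])
  moreover have "transpose_mat (g' * h') *\<^sub>v c = c2"
    using carrier c gc hc by (simp add: transpose_mult[of _ m m _ m] assoc_mult_mat_vec[of _ m m _ m])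
  ultimately show ?thesis
    unfolding E_related_def using g h carrier inverse_pair_mult[of h m h' g g']
    by (intro exI[of _ "h * g"] exI[of _ "g' * h'"]) (simp add: E_group_mult)
qed

lemma E_related_scalar_prod:
  assumes "d \<in> carrier_vec m" "c \<in> carrier_vec m" "E_related m (d, c) (d', c')"
  shows "c' \<bullet> d' = c \<bullet> d"
proof -
  obtain g g' where "g \<in> E_group m" "g' \<in> E_group m" "g' * g = 1\<^sub>m m"
    and "d' = g *\<^sub>v d" "c' = transpose_mat g' *\<^sub>v c"
    using assms(3) unfolding E_related_def by auto
  then show ?thesis
    using assms(1,2) scalar_prod_contragredient[of g m g'] E_group_carrier[of g m] E_group_carrier[of g' m]
    by simp
qed

lemma E_related_carrier:
  assumes "d \<in> carrier_vec m" "c \<in> carrier_vec m" "E_related m (d, c) (d', c')"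
  shows "d' \<in> carrier_vec m" "c' \<in> carrier_vec m"
proof -
  obtain g g' where "g \<in> E_group m" "g' \<in> E_group m" "d' = g *\<^sub>v d" "c' = transpose_mat g' *\<^sub>v c"
    using assms(3) unfolding E_related_def by auto
  then show "d' \<in> carrier_vec m" "c' \<in> carrier_vec m"
    using assms(1,2) E_group_carrier[of g m] E_group_carrier[of g' m] by auto
qed

lemma E_related_transvection:
  assumes "x \<in> carrier_vec m" "y \<in> carrier_vec m" "y \<bullet> x = 0"
    and "transvection m x y \<in> E_group m" "transvection m x (- y) \<in> E_group m"
    and "d \<in> carrier_vec m" "c \<in> carrier_vec m"
  shows "E_related m (d, c) (d + (y \<bullet> d) \<cdot>\<^sub>v x, c + (x \<bullet> c) \<cdot>\<^sub>v (- y))"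
  unfolding E_related_def using assms
  by (intro exI[of _ "transvection m x y"] exI[of _ "transvection m x (- y)"])
    (simp add: transvection_inverse transpose_transvection transvection_mult_vec)

lemma E_related_make_entry_one:
  assumes d: "d \<in> carrier_vec m" and c: "c \<in> carrier_vec m"
    and jk: "j < m" "k < m" "j \<noteq> k" and w: "w * d $ k = 1"
  shows "\<exists>d' c'. E_related m (d, c) (d', c') \<and> d' $ j = 1 \<and> d' $ k = d $ k"
proof -
  define l where "l = w * (1 - d $ j)"
  let ?x = "unit_vec m j" and ?y = "l \<cdot>\<^sub>v unit_vec m k"
  have "- ?y = (- l) \<cdot>\<^sub>v unit_vec m k" by (intro eq_vecI) auto
  then have "transvection m ?x ?y \<in> E_group m" "transvection m ?x (- ?y) \<in> E_group m"
    using jk elem_mat_in_E_group[of j m k] by (simp_all add: elem_mat_eq_transvection)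
  then have "E_related m (d, c) (d + (?y \<bullet> d) \<cdot>\<^sub>v ?x, c + (?x \<bullet> c) \<cdot>\<^sub>v (- ?y))"
    using jk d c by (intro E_related_transvection) auto
  moreover have "?y \<bullet> d = (1 - d $ j) * (w * d $ k)"
    using jk d unfolding l_def by (simp add: algebra_simps)
  moreover have "(d + (1 - d $ j) \<cdot>\<^sub>v ?x) $ j = 1" "(d + (1 - d $ j) \<cdot>\<^sub>v ?x) $ k = d $ k"
    using jk d by auto
  ultimately show ?thesis using w by auto
qed

lemma E_related_first_entry_one:
  fixes c d :: "'a::comm_ring_1 vec"
  assumes loc: "local_ring TYPE('a)" and m: "2 \<le> m"
    and c: "c \<in> carrier_vec m" and d: "d \<in> carrier_vec m" and cd: "c \<bullet> d = 1"
  shows "\<exists>d' c'. E_related m (d, c) (d', c') \<and> d' $ 0 = 1"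
proof -
  obtain k w where k: "k < m" and w: "w * d $ k = 1"
    using local_ring_unimodular_unit_entry[OF loc c d cd] by auto
  show ?thesis
  proof (cases "k = 0")
    case False
    then show ?thesis using E_related_make_entry_one[OF d c _ k _ w, of 0] m by auto
  next
    case True
    obtain d1 c1 where rel1: "E_related m (d, c) (d1, c1)" and d1: "d1 $ 1 = 1"
      using E_related_make_entry_one[OF d c _ k _ w, of 1] m True by auto
    have "d1 \<in> carrier_vec m" "c1 \<in> carrier_vec m"
      using E_related_carrier[OF d c rel1] by auto
    then obtain d2 c2 where "E_related m (d1, c1) (d2, c2)" "d2 $ 0 = 1"
      using E_related_make_entry_one[of d1 m c1 0 1 1] d1 m by auto
    then show ?thesis using E_related_trans[OF d c rel1] by blast
  qed
qed

lemma E_related_clear_first: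
  assumes m: "0 < m" and d: "d \<in> carrier_vec m" and c: "c \<in> carrier_vec m" and d0: "d $ 0 = 1"
  shows "\<exists>c'. E_related m (d, c) (unit_vec m 0, c')"
proof -
  let ?e = "unit_vec m 0" and ?x = "unit_vec m 0 - d"
  have x: "?x \<in> carrier_vec m" "?x $ 0 = 0" "- ?x \<in> carrier_vec m" "(- ?x) $ 0 = 0"
    using m d d0 by auto
  have "transvection m ?x ?e \<in> E_group m" "transvection m ?x (- ?e) \<in> E_group m"
    using first_col_transvection_in_E_group[OF m x(1,2)] first_col_transvection_in_E_group[OF m x(3,4)] x
    by (auto simp: transvection_uminus_swap)
  then have "E_related m (d, c) (d + (?e \<bullet> d) \<cdot>\<^sub>v ?x, c + (?x \<bullet> c) \<cdot>\<^sub>v (- ?e))"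
    using m x d c by (intro E_related_transvection) auto
  moreover have "d + (?e \<bullet> d) \<cdot>\<^sub>v ?x = ?e"
    using m d d0 by (intro eq_vecI) auto
  ultimately show ?thesis by auto
qed

lemma E_related_clear_second:
  assumes m: "0 < m" and c: "c \<in> carrier_vec m" and c0: "c $ 0 = 1"
  shows "E_related m (unit_vec m 0, c) (unit_vec m 0, unit_vec m 0)"
proof -
  let ?e = "unit_vec m 0" and ?y = "c - unit_vec m 0"
  have y: "?y \<in> carrier_vec m" "?y $ 0 = 0" "- ?y \<in> carrier_vec m" "(- ?y) $ 0 = 0"
    using m c c0 by auto
  have "transvection m ?e ?y \<in> E_group m" "transvection m ?e (- ?y) \<in> E_group m"
    using first_row_transvection_in_E_group[OF m y(1,2)] first_row_transvection_in_E_group[OF m y(3,4)]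
    by auto
  then have "E_related m (?e, c) (?e + (?y \<bullet> ?e) \<cdot>\<^sub>v ?e, c + (?e \<bullet> c) \<cdot>\<^sub>v (- ?y))"
    using m y c by (intro E_related_transvection) auto
  moreover have "?e + (?y \<bullet> ?e) \<cdot>\<^sub>v ?e = ?e" "c + (?e \<bullet> c) \<cdot>\<^sub>v (- ?y) = ?e"
    using m y c c0 by (auto intro!: eq_vecI)
  ultimately show ?thesis by auto
qed

lemma E_related_unit_pair:
  fixes c d :: "'a::comm_ring_1 vec"
  assumes loc: "local_ring TYPE('a)" and m: "2 \<le> m"
    and c: "c \<in> carrier_vec m" and d: "d \<in> carrier_vec m" and cd: "c \<bullet> d = 1"
  shows "E_related m (d, c) (unit_vec m 0, unit_vec m 0)"
proof -
  let ?e = "unit_vec m 0 :: 'a vec"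
  obtain d1 c1 where rel1: "E_related m (d, c) (d1, c1)" and d1: "d1 $ 0 = 1"
    using E_related_first_entry_one[OF loc m c d cd] by auto
  have d1c1: "d1 \<in> carrier_vec m" "c1 \<in> carrier_vec m"
    using E_related_carrier[OF d c rel1] by auto
  obtain c2 where rel2: "E_related m (d1, c1) (?e, c2)"
    using E_related_clear_first[OF _ d1c1 d1] m by auto
  have rel12: "E_related m (d, c) (?e, c2)"
    using E_related_trans[OF d c rel1 rel2] .
  have "c2 \<in> carrier_vec m" "c2 \<bullet> ?e = 1"
    using E_related_carrier[OF d c rel12] E_related_scalar_prod[OF d c rel12] cd by auto
  then have "E_related m (?e, c2) (?e, ?e)"
    using m by (intro E_related_clear_second) auto
  then show ?thesis
    using E_related_trans[OF d c rel12] by blast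
qed

theorem E_group_eq_gen_transvection_gens:
  fixes c d :: "'a::comm_ring_1 vec"
  assumes loc: "local_ring TYPE('a)" and m: "2 \<le> m"
    and c: "c \<in> carrier_vec m" and d: "d \<in> carrier_vec m" and cd: "c \<bullet> d = 1"
  shows "E_group m = gen_group m (transvection_gens m c d)"
proof -
  let ?e = "unit_vec m 0 :: 'a vec"
  obtain g g' where gE: "g \<in> E_group m" "g' \<in> E_group m" and inv: "g * g' = 1\<^sub>m m" "g' * g = 1\<^sub>m m"
    and gd: "g *\<^sub>v d = ?e" and gc: "transpose_mat g' *\<^sub>v c = ?e"
    using E_related_unit_pair[OF loc m c d cd] unfolding E_related_def by auto
  have gC: "g \<in> carrier_mat m m" "g' \<in> carrier_mat m m"
    using gE E_group_carrier by auto
  have g'e: "g' *\<^sub>v ?e = d"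
    using gC inv d unfolding gd[symmetric] by (simp flip: assoc_mult_mat_vec[of _ m m _ m])
  have gte: "transpose_mat g *\<^sub>v ?e = c"
    using gC inv c unfolding gc[symmetric]
    by (simp flip: assoc_mult_mat_vec[of _ m m _ m] transpose_mult[of _ m m _ m])
  have E_unit: "E_group m = gen_group m (transvection_gens m ?e ?e)"
    using m by (intro E_group_eq_gen_unit_transvections) auto
  have to_unit: "g * h * g' \<in> E_group m" if "h \<in> gen_group m (transvection_gens m c d)" for h
    using conj_gen_transvection_gens[OF gC inv c d that] gd gc E_unit by simp
  have from_unit: "g' * h * g \<in> gen_group m (transvection_gens m c d)" if "h \<in> E_group m" for h
    using conj_gen_transvection_gens[OF gC(2,1) inv(2,1), of ?e ?e h] that E_unit g'e gte m by simp
  show ?thesis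
  proof
    show "E_group m \<subseteq> gen_group m (transvection_gens m c d)"
    proof
      fix h :: "'a mat" assume h: "h \<in> E_group m"
      then have "g' * (g * h * g') * g \<in> gen_group m (transvection_gens m c d)"
        using from_unit gE E_group_mult by blast
      then show "h \<in> gen_group m (transvection_gens m c d)"
        using conj_cancel[OF gC _ inv] E_group_carrier[OF h] by simp
    qed
    show "gen_group m (transvection_gens m c d) \<subseteq> E_group m"
    proof
      fix h :: "'a mat" assume h: "h \<in> gen_group m (transvection_gens m c d)"
      then have "g' * (g * h * g') * g \<in> E_group m"
        using to_unit gE E_group_mult by blast
      then show "h \<in> E_group m"
        using conj_cancel[OF gC _ inv] gen_group_carrier[OF transvection_gens_carrier[OF c d] h] by simp
    qed
  qed
qed

section \<open>Alternating matrices and the group \<open>E\<^sub>\<phi>\<close>\<close>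

lemma alternating_transpose:
  assumes "alternating A" "A \<in> carrier_mat n n"
  shows "transpose_mat A = - A"
proof -
  obtain \<nu> where "\<nu> \<in> carrier_mat n n" "A = \<nu> - transpose_mat \<nu>"
    using assms unfolding alternating_def by auto
  then show ?thesis by (intro eq_matI) auto
qed

lemma alternating_diag:
  assumes "alternating A" "A \<in> carrier_mat n n" "i < n"
  shows "A $$ (i, i) = 0"
proof -
  obtain \<nu> where "\<nu> \<in> carrier_mat n n" "A = \<nu> - transpose_mat \<nu>"
    using assms unfolding alternating_def by auto
  then show ?thesis using assms(3) by simp
qed

lemma alternating_quadratic_form:
  assumes "alternating A" "A \<in> carrier_mat n n" "w \<in> carrier_vec n"
  shows "w \<bullet> (A *\<^sub>v w) = 0"
proof -
  obtain \<nu> where \<nu>: "\<nu> \<in> carrier_mat n n" and A: "A = \<nu> - transpose_mat \<nu>"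
    using assms unfolding alternating_def by auto
  have "w \<bullet> (transpose_mat \<nu> *\<^sub>v w) = (transpose_mat \<nu> *\<^sub>v w) \<bullet> w"
    using \<nu> assms(3) by (intro comm_scalar_prod) auto
  also have "\<dots> = w \<bullet> (\<nu> *\<^sub>v w)"
    using \<nu> assms(3) by (intro transpose_vec_mult_scalar)
  finally show ?thesis
    using \<nu> assms(3) unfolding A
    by (simp add: minus_mult_distrib_mat_vec[of _ n n] scalar_prod_minus_distrib[of _ n])
qed

lemma mult_mat_index_split_first:
  fixes A B :: "'a::comm_ring_1 mat"
  assumes "A \<in> carrier_mat (Suc m) (Suc m)" "B \<in> carrier_mat (Suc m) (Suc m)" "a < Suc m" "b < Suc m"
  shows "(A * B) $$ (a, b) = A $$ (a, 0) * B $$ (0, b) + (\<Sum>k<m. A $$ (a, Suc k) * B $$ (Suc k, b))"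
  using assms by (simp add: scalar_prod_def atLeast0LessThan sum.lessThan_Suc_shift del: sum.lessThan_Suc)

locale alternating_inverse =
  fixes m :: nat and \<phi> \<psi> :: "'a::comm_ring_1 mat"
  assumes \<phi>_carrier: "\<phi> \<in> carrier_mat (Suc m) (Suc m)"
    and \<psi>_carrier: "\<psi> \<in> carrier_mat (Suc m) (Suc m)"
    and \<phi>_alternating: "alternating \<phi>"
    and \<phi>_\<psi>: "\<phi> * \<psi> = 1\<^sub>m (Suc m)"
begin

lemma neg_transpose_\<psi>_left_inverse: "- transpose_mat \<psi> * \<phi> = 1\<^sub>m (Suc m)"
proof -
  have "\<phi> = - transpose_mat \<phi>"
    using alternating_transpose[OF \<phi>_alternating \<phi>_carrier] by simp
  then have "- transpose_mat \<psi> * \<phi> = transpose_mat \<psi> * transpose_mat \<phi>"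
    using \<phi>_carrier \<psi>_carrier by (metis carrier_matD transpose_carrier_mat uminus_mult_left_mat
      uminus_mult_right_mat uminus_uminus_mat index_transpose_mat(2,3))
  also have "\<dots> = 1\<^sub>m (Suc m)"
    using \<phi>_carrier \<psi>_carrier \<phi>_\<psi> by (simp flip: transpose_mult[of \<phi> _ _ \<psi>])
  finally show ?thesis .
qed

lemma transpose_\<psi>: "transpose_mat \<psi> = - \<psi>"
proof -
  have "- transpose_mat \<psi> = \<psi>"
    using left_inverse_eq_right_inverse[OF \<phi>_carrier \<psi>_carrier _ \<phi>_\<psi> neg_transpose_\<psi>_left_inverse]
      \<psi>_carrier by simp
  then show ?thesis by (metis uminus_uminus_mat)
qed

lemma \<psi>_\<phi>: "\<psi> * \<phi> = 1\<^sub>m (Suc m)"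
  using neg_transpose_\<psi>_left_inverse transpose_\<psi> by simp

lemma \<phi>_antisym: "i < Suc m \<Longrightarrow> j < Suc m \<Longrightarrow> \<phi> $$ (j, i) = - \<phi> $$ (i, j)"
  using alternating_transpose[OF \<phi>_alternating \<phi>_carrier] \<phi>_carrier
  by (metis carrier_matD index_transpose_mat(1) index_uminus_mat(1))

lemma \<psi>_antisym: "i < Suc m \<Longrightarrow> j < Suc m \<Longrightarrow> \<psi> $$ (j, i) = - \<psi> $$ (i, j)"
  using transpose_\<psi> \<psi>_carrier by (metis carrier_matD index_transpose_mat(1) index_uminus_mat(1))

lemma \<psi>_corner: "\<psi> $$ (0, 0) = 0"
proof -
  define w where "w = col \<psi> 0"
  have w: "w \<in> carrier_vec (Suc m)" unfolding w_def carrier_vec_def using \<psi>_carrier by simp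
  have "\<phi> *\<^sub>v w = col (\<phi> * \<psi>) 0" unfolding w_def using \<phi>_carrier \<psi>_carrier by (intro eq_vecI) auto
  also have "\<dots> = unit_vec (Suc m) 0" unfolding \<phi>_\<psi> by (intro eq_vecI) auto
  finally have "w \<bullet> unit_vec (Suc m) 0 = 0"
    using alternating_quadratic_form[OF \<phi>_alternating \<phi>_carrier w] by simp
  then show ?thesis using w \<psi>_carrier unfolding w_def by simp
qed

lemma blk_c_index: "k < m \<Longrightarrow> blk_c \<phi> $ k = - \<phi> $$ (0, Suc k)"
  using \<phi>_carrier unfolding blk_c_def by auto

lemma blk_d_index: "k < m \<Longrightarrow> blk_d \<psi> $ k = \<psi> $$ (0, Suc k)"
  using \<psi>_carrier unfolding blk_d_def by auto

lemma blk_low_index: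
  "i < m \<Longrightarrow> j < m \<Longrightarrow> blk_low \<phi> $$ (i, j) = \<phi> $$ (Suc i, Suc j)"
  "i < m \<Longrightarrow> j < m \<Longrightarrow> blk_low \<psi> $$ (i, j) = \<psi> $$ (Suc i, Suc j)"
  using \<phi>_carrier \<psi>_carrier unfolding blk_low_def by auto

lemma blk_carrier:
  "blk_c \<phi> \<in> carrier_vec m" "blk_d \<psi> \<in> carrier_vec m"
  "blk_low \<phi> \<in> carrier_mat m m" "blk_low \<psi> \<in> carrier_mat m m"
  using \<phi>_carrier \<psi>_carrier unfolding blk_c_def blk_d_def blk_low_def by auto

lemma blk_c_scalar_prod_blk_d: "blk_c \<phi> \<bullet> blk_d \<psi> = 1"
proof -
  have "1 = (\<psi> * \<phi>) $$ (0, 0)" unfolding \<psi>_\<phi> by simp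
  also have "\<dots> = (\<Sum>k<m. \<psi> $$ (0, Suc k) * \<phi> $$ (Suc k, 0))"
    using \<psi>_corner by (simp add: mult_mat_index_split_first[OF \<psi>_carrier \<phi>_carrier])
  also have "\<dots> = blk_c \<phi> \<bullet> blk_d \<psi>"
    using blk_carrier \<phi>_antisym[of 0]
    by (simp add: scalar_prod_def atLeast0LessThan blk_c_index blk_d_index mult.commute)
  finally show ?thesis by simp
qed

lemma blk_low_\<phi>_blk_d: "blk_low \<phi> *\<^sub>v blk_d \<psi> = 0\<^sub>v m"
proof (rule eq_vecI)
  fix j assume "j < dim_vec (0\<^sub>v m :: 'a vec)"
  then have j: "j < m" by simp
  have "0 = (\<phi> * \<psi>) $$ (Suc j, 0)" unfolding \<phi>_\<psi> using j by simp
  also have "\<dots> = (\<Sum>k<m. \<phi> $$ (Suc j, Suc k) * \<psi> $$ (Suc k, 0))"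
    using j \<psi>_corner by (simp add: mult_mat_index_split_first[OF \<phi>_carrier \<psi>_carrier])
  also have "\<dots> = - (blk_low \<phi> *\<^sub>v blk_d \<psi>) $ j"
    using j blk_carrier \<psi>_antisym[of 0]
    by (simp add: scalar_prod_def atLeast0LessThan blk_low_index blk_d_index sum_negf)
  finally show "(blk_low \<phi> *\<^sub>v blk_d \<psi>) $ j = 0\<^sub>v m $ j" using j by simp
qed (use blk_carrier in auto)

lemma transpose_blk_low_\<psi>_blk_c: "transpose_mat (blk_low \<psi>) *\<^sub>v blk_c \<phi> = 0\<^sub>v m"
proof (rule eq_vecI)
  fix j assume "j < dim_vec (0\<^sub>v m :: 'a vec)"
  then have j: "j < m" by simp
  have "0 = (\<phi> * \<psi>) $$ (0, Suc j)" unfolding \<phi>_\<psi> using j by simp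
  also have "\<dots> = (\<Sum>k<m. \<phi> $$ (0, Suc k) * \<psi> $$ (Suc k, Suc j))"
    using j alternating_diag[OF \<phi>_alternating \<phi>_carrier, of 0]
    by (simp add: mult_mat_index_split_first[OF \<phi>_carrier \<psi>_carrier])
  also have "\<dots> = - (transpose_mat (blk_low \<psi>) *\<^sub>v blk_c \<phi>) $ j"
    using j blk_carrier
    by (simp add: scalar_prod_def atLeast0LessThan blk_low_index blk_c_index sum_negf algebra_simps)
  finally show "(transpose_mat (blk_low \<psi>) *\<^sub>v blk_c \<phi>) $ j = 0\<^sub>v m $ j" using j by simp
qed (use blk_carrier in auto)

lemma blk_low_\<psi>_blk_low_\<phi>: "blk_low \<psi> * blk_low \<phi> = transvection m (blk_d \<psi>) (- blk_c \<phi>)"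
proof (rule eq_matI)
  fix i j assume "i < dim_row (transvection m (blk_d \<psi>) (- blk_c \<phi>))"
    "j < dim_col (transvection m (blk_d \<psi>) (- blk_c \<phi>))"
  then have i: "i < m" and j: "j < m" using blk_carrier by auto
  have "(if i = j then 1 else 0) = (\<psi> * \<phi>) $$ (Suc i, Suc j)" unfolding \<psi>_\<phi> using i j by simp
  also have "\<dots> = \<psi> $$ (Suc i, 0) * \<phi> $$ (0, Suc j) + (blk_low \<psi> * blk_low \<phi>) $$ (i, j)"
    using i j blk_carrier
    by (simp add: mult_mat_index_split_first[OF \<psi>_carrier \<phi>_carrier] scalar_prod_def
        atLeast0LessThan blk_low_index)
  also have "\<psi> $$ (Suc i, 0) * \<phi> $$ (0, Suc j) = blk_d \<psi> $ i * blk_c \<phi> $ j"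
    using i j \<psi>_antisym[of 0 "Suc i"] by (simp add: blk_c_index blk_d_index)
  finally show "(blk_low \<psi> * blk_low \<phi>) $$ (i, j) = transvection m (blk_d \<psi>) (- blk_c \<phi>) $$ (i, j)"
    using i j blk_carrier by (simp add: transvection_index algebra_simps)
qed (use blk_carrier in auto)

lemma alpha_mat_eq_transvection:
  "v \<in> carrier_vec m \<Longrightarrow> alpha_mat \<phi> \<psi> v = transvection m (blk_d \<psi>) (transpose_mat (blk_low \<phi>) *\<^sub>v v)"
  unfolding alpha_mat_def transvection_def using \<phi>_carrier blk_carrier by (simp add: outer_mult[of _ m m])

lemma beta_mat_eq_transvection:
  "v \<in> carrier_vec m \<Longrightarrow> beta_mat \<phi> \<psi> v = transvection m (blk_low \<psi> *\<^sub>v v) (blk_c \<phi>)"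
  unfolding beta_mat_def transvection_def using \<phi>_carrier blk_carrier by (simp add: mult_outer[of _ m m])

lemma alpha_mats_eq:
  "{alpha_mat \<phi> \<psi> v | v. v \<in> carrier_vec m}
    = {transvection m (blk_d \<psi>) y | y. y \<in> carrier_vec m \<and> y \<bullet> blk_d \<psi> = 0}"
proof (intro equalityI subsetI)
  fix X assume "X \<in> {alpha_mat \<phi> \<psi> v | v. v \<in> carrier_vec m}"
  then obtain v where v: "v \<in> carrier_vec m" "X = alpha_mat \<phi> \<psi> v" by auto
  have "(transpose_mat (blk_low \<phi>) *\<^sub>v v) \<bullet> blk_d \<psi> = v \<bullet> (blk_low \<phi> *\<^sub>v blk_d \<psi>)"
    using v blk_carrier by (intro transpose_vec_mult_scalar) auto
  also have "\<dots> = 0" using v by (simp add: blk_low_\<phi>_blk_d)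
  finally show "X \<in> {transvection m (blk_d \<psi>) y | y. y \<in> carrier_vec m \<and> y \<bullet> blk_d \<psi> = 0}"
    using v blk_carrier by (auto simp: alpha_mat_eq_transvection)
next
  fix X assume "X \<in> {transvection m (blk_d \<psi>) y | y. y \<in> carrier_vec m \<and> y \<bullet> blk_d \<psi> = 0}"
  then obtain y where y: "y \<in> carrier_vec m" "y \<bullet> blk_d \<psi> = 0" "X = transvection m (blk_d \<psi>) y"
    by auto
  define v where "v = transpose_mat (blk_low \<psi>) *\<^sub>v y"
  have "transpose_mat (blk_low \<phi>) *\<^sub>v v = transpose_mat (blk_low \<psi> * blk_low \<phi>) *\<^sub>v y"
    unfolding v_def using y blk_carrier
    by (simp add: transpose_mult[of _ m m _ m] assoc_mult_mat_vec[of _ m m _ m])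
  also have "\<dots> = y + (blk_d \<psi> \<bullet> y) \<cdot>\<^sub>v (- blk_c \<phi>)"
    using y blk_carrier by (simp add: blk_low_\<psi>_blk_low_\<phi> transpose_transvection transvection_mult_vec)
  also have "\<dots> = y"
    using y blk_carrier comm_scalar_prod[of y m "blk_d \<psi>"] by auto
  moreover have v: "v \<in> carrier_vec m" unfolding v_def using y blk_carrier by auto
  ultimately have "X = alpha_mat \<phi> \<psi> v"
    using y alpha_mat_eq_transvection by simp
  then show "X \<in> {alpha_mat \<phi> \<psi> v | v. v \<in> carrier_vec m}"
    using v by blast
qed

lemma beta_mats_eq:
  "{beta_mat \<phi> \<psi> v | v. v \<in> carrier_vec m}
    = {transvection m x (blk_c \<phi>) | x. x \<in> carrier_vec m \<and> blk_c \<phi> \<bullet> x = 0}"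
proof (intro equalityI subsetI)
  fix X assume "X \<in> {beta_mat \<phi> \<psi> v | v. v \<in> carrier_vec m}"
  then obtain v where v: "v \<in> carrier_vec m" "X = beta_mat \<phi> \<psi> v" by auto
  have "blk_c \<phi> \<bullet> (blk_low \<psi> *\<^sub>v v) = (transpose_mat (blk_low \<psi>) *\<^sub>v blk_c \<phi>) \<bullet> v"
    using v blk_carrier by (intro transpose_vec_mult_scalar[symmetric]) auto
  also have "\<dots> = 0" using v by (simp add: transpose_blk_low_\<psi>_blk_c)
  finally show "X \<in> {transvection m x (blk_c \<phi>) | x. x \<in> carrier_vec m \<and> blk_c \<phi> \<bullet> x = 0}"
    using v blk_carrier by (auto simp: beta_mat_eq_transvection)
next
  fix X assume "X \<in> {transvection m x (blk_c \<phi>) | x. x \<in> carrier_vec m \<and> blk_c \<phi> \<bullet> x = 0}"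
  then obtain x where x: "x \<in> carrier_vec m" "blk_c \<phi> \<bullet> x = 0" "X = transvection m x (blk_c \<phi>)"
    by auto
  define v where "v = blk_low \<phi> *\<^sub>v x"
  have "blk_low \<psi> *\<^sub>v v = x + (- blk_c \<phi> \<bullet> x) \<cdot>\<^sub>v blk_d \<psi>"
    unfolding v_def using x blk_carrier
    by (simp add: blk_low_\<psi>_blk_low_\<phi> transvection_mult_vec flip: assoc_mult_mat_vec[of _ m m _ m])
  also have "\<dots> = x"
    using x blk_carrier by auto
  moreover have v: "v \<in> carrier_vec m" unfolding v_def using x blk_carrier by auto
  ultimately have "X = beta_mat \<phi> \<psi> v"
    using x beta_mat_eq_transvection by simp
  then show "X \<in> {beta_mat \<phi> \<psi> v | v. v \<in> carrier_vec m}"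
    using v by blast
qed

lemma E_phi_eq_gen_transvection_gens:
  "E_phi \<phi> \<psi> = gen_group m (transvection_gens m (blk_c \<phi>) (blk_d \<psi>))"
  unfolding E_phi_def transvection_gens_def using \<phi>_carrier alpha_mats_eq beta_mats_eq by simp

end

text \<open>The Pfaffian hypothesis only serves to make \<open>\<phi>\<close> invertible, and its inverse \<open>\<psi>\<close> is given.\<close>

theorem corollary4p5:
  fixes \<phi> \<psi> :: "'a::comm_ring_1 mat" and n :: nat
  assumes "local_ring TYPE('a)"
    and "n \<ge> 2"
    and "\<phi> \<in> carrier_mat (2*n) (2*n)"
    and "alternating \<phi>"
    and "pfaffian \<phi> = 1"
    and "\<psi> \<in> carrier_mat (2*n) (2*n)"
    and "\<phi> * \<psi> = 1\<^sub>m (2*n)"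
  shows "E_group (2*n - 1) = E_phi \<phi> \<psi>"
proof -
  define m where "m = 2 * n - 1"
  have dims: "2 * n = Suc m" "2 \<le> m" using assms(2) unfolding m_def by auto
  interpret alternating_inverse m \<phi> \<psi>
    using assms(3,4,6,7) unfolding dims by unfold_locales
  have "E_group m = gen_group m (transvection_gens m (blk_c \<phi>) (blk_d \<psi>))"
    using assms(1) dims(2) blk_carrier blk_c_scalar_prod_blk_d by (intro E_group_eq_gen_transvection_gens)
  then show ?thesis
    using E_phi_eq_gen_transvection_gens unfolding m_def by simp
qed

end
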